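(* In the Setting below, let $V_{2i}$ and $V_{2j}$ be two (possibly equal) of the $2$-dimensional summands of $J_{\mathcal M}$, with bases $\{u_i,v_i\}$ and $\{u_j,v_j\}$ satisfying $uH=u$, $vH=-v$, $uE=v$, $uF=0$, $vE=0$, $vF=-u$. Then $(u_iu_j)E=-u_iv_j$, $(u_iv_j)E=-\tfrac12 v_iv_j$, $(v_iv_j)E=0$, $(u_iu_j)F=0$, $(u_iv_j)F=\tfrac12 u_iu_j$, $(v_iv_j)F=u_iv_j$, $(u_iu_j)H=-u_iu_j$, $(u_iv_j)H=0$, $(v_iv_j)H=v_iv_j$, and $u_iv_j=v_iu_j$. Moreover $J(xy,a,b)=0$ for all $x,y\in J_{\mathcal M}$ and $a,b\in L$ (so $J_{\mathcal M}^2$ is a Lie $L$-module), and if $i=j$ then $V_{2i}V_{2i}=0$.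
   Context: Setting. Let $\mathbb F$ be a field of characteristic different from $2$ and $3$. A Malcev algebra is an anticommutative algebra $\mathcal M$ over $\mathbb F$ satisfying $(xz)(yt)=((xy)z)t+((yz)t)x+((zt)x)y+((tx)y)z$. Products are left-normed: $xyz=(xy)z$, $xyzt=((xy)z)t$. Put $J(x,y,z)=xyz+yzx+zxy$ (the Jacobian), $\{x,y,z\}=xyz-xzy+2x(yz)$, and $h(y,z,t,x,u)=\{yz,t,u\}x+\{yz,t,x\}u+\{yx,z,u\}t+\{yu,z,x\}t$. The variety $\mathcal H$ consists of the Malcev algebras satisfying $h(y,z,t,x,u)=0$ identically. Let $L=\mathfrak{sl}_2(\mathbb F)$ with basis $E,H,F$ and products $EH=E$, $FH=-F$, $EF=\tfrac12 H$. Standing assumption: $\mathcal M\in\mathcal H$ contains $L$ as a subalgebra and $mL\neq 0$ for every $0\neq m\in\mathcal M$. Define $N_{\mathcal M}=\{m\in\mathcal M: J(m,a,b)=0\ \forall a,b\in L\}$ and $J_{\mathcal M}=\{m\in\mathcal M:\{m,a,b\}=0\ \forall a,b\in L\}$. Known facts (from prior work): $\mathcal M=N_{\mathcal M}\oplus J_{\mathcal M}$; $J_{\mathcal M}$ is a direct sum of $L$-submodules $V_{2i}$, each with a basis $\{u_i,v_i\}$ satisfying $u_iH=u_i$, $v_iH=-v_i$, $u_iE=v_i$, $u_iF=0$, $v_iE=0$, $v_iF=-u_i$. *)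

theory Defs
  imports Main "HOL.Vector_Spaces"
begin

text \<open>An algebra over a field 'f is a vector space 'm (scalar multiplication sc)
 with a product mul. Products are left-normed in the paper.\<close>

definition bilinear_prod :: "('f::field \<Rightarrow> 'm::ab_group_add \<Rightarrow> 'm) \<Rightarrow> ('m \<Rightarrow> 'm \<Rightarrow> 'm) \<Rightarrow> bool" where
  "bilinear_prod sc mul \<longleftrightarrow>
     (\<forall>x y z. mul (x + y) z = mul x z + mul y z) \<and>
     (\<forall>x y z. mul x (y + z) = mul x y + mul x z) \<and>
     (\<forall>c x y. mul (sc c x) y = sc c (mul x y)) \<and>
     (\<forall>c x y. mul x (sc c y) = sc c (mul x y))"

definition malcev_algebra :: "('f::field \<Rightarrow> 'm::ab_group_add \<Rightarrow> 'm) \<Rightarrow> ('m \<Rightarrow> 'm \<Rightarrow> 'm) \<Rightarrow> bool" where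
  "malcev_algebra sc mul \<longleftrightarrow>
     vector_space sc \<and> bilinear_prod sc mul \<and>
     (\<forall>x. mul x x = 0) \<and>
     (\<forall>x y z t. mul (mul x z) (mul y t) =
        mul (mul (mul x y) z) t + mul (mul (mul y z) t) x
      + mul (mul (mul z t) x) y + mul (mul (mul t x) y) z)"

definition jac :: "('m::ab_group_add \<Rightarrow> 'm \<Rightarrow> 'm) \<Rightarrow> 'm \<Rightarrow> 'm \<Rightarrow> 'm \<Rightarrow> 'm" where
  "jac mul x y z = mul (mul x y) z + mul (mul y z) x + mul (mul z x) y"

definition trip :: "('m::ab_group_add \<Rightarrow> 'm \<Rightarrow> 'm) \<Rightarrow> 'm \<Rightarrow> 'm \<Rightarrow> 'm \<Rightarrow> 'm" where
  "trip mul x y z = mul (mul x y) z - mul (mul x z) y + (mul x (mul y z) + mul x (mul y z))"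

definition hfun :: "('m::ab_group_add \<Rightarrow> 'm \<Rightarrow> 'm) \<Rightarrow> 'm \<Rightarrow> 'm \<Rightarrow> 'm \<Rightarrow> 'm \<Rightarrow> 'm \<Rightarrow> 'm" where
  "hfun mul y z t x u =
     mul (trip mul (mul y z) t u) x + mul (trip mul (mul y z) t x) u
   + mul (trip mul (mul y x) z u) t + mul (trip mul (mul y u) z x) t"

definition in_variety_H :: "('f::field \<Rightarrow> 'm::ab_group_add \<Rightarrow> 'm) \<Rightarrow> ('m \<Rightarrow> 'm \<Rightarrow> 'm) \<Rightarrow> bool" where
  "in_variety_H sc mul \<longleftrightarrow> malcev_algebra sc mul \<and> (\<forall>y z t x u. hfun mul y z t x u = 0)"

definition sl2_triple :: "('f::field \<Rightarrow> 'm::ab_group_add \<Rightarrow> 'm) \<Rightarrow> ('m \<Rightarrow> 'm \<Rightarrow> 'm) \<Rightarrow> 'm \<Rightarrow> 'm \<Rightarrow> 'm \<Rightarrow> bool" where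
  "sl2_triple sc mul E H F \<longleftrightarrow>
     E \<noteq> H \<and> E \<noteq> F \<and> H \<noteq> F \<and> \<not> module.dependent sc {E, H, F} \<and>
     mul E H = E \<and> mul F H = - F \<and> mul E F = sc (1/2) H"

definition Lsub :: "('f::field \<Rightarrow> 'm::ab_group_add \<Rightarrow> 'm) \<Rightarrow> 'm \<Rightarrow> 'm \<Rightarrow> 'm \<Rightarrow> 'm set" where
  "Lsub sc E H F = module.span sc {E, H, F}"

definition NM :: "('f::field \<Rightarrow> 'm::ab_group_add \<Rightarrow> 'm) \<Rightarrow> ('m \<Rightarrow> 'm \<Rightarrow> 'm) \<Rightarrow> 'm \<Rightarrow> 'm \<Rightarrow> 'm \<Rightarrow> 'm set" where
  "NM sc mul E H F = {m. \<forall>a\<in>Lsub sc E H F. \<forall>b\<in>Lsub sc E H F. jac mul m a b = 0}"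

definition JM :: "('f::field \<Rightarrow> 'm::ab_group_add \<Rightarrow> 'm) \<Rightarrow> ('m \<Rightarrow> 'm \<Rightarrow> 'm) \<Rightarrow> 'm \<Rightarrow> 'm \<Rightarrow> 'm \<Rightarrow> 'm set" where
  "JM sc mul E H F = {m. \<forall>a\<in>Lsub sc E H F. \<forall>b\<in>Lsub sc E H F. trip mul m a b = 0}"

definition std_pair :: "('m::ab_group_add \<Rightarrow> 'm \<Rightarrow> 'm) \<Rightarrow> 'm \<Rightarrow> 'm \<Rightarrow> 'm \<Rightarrow> 'm \<Rightarrow> 'm \<Rightarrow> bool" where
  "std_pair mul E H F u v \<longleftrightarrow>
     mul u H = u \<and> mul v H = - v \<and> mul u E = v \<and> mul u F = 0 \<and> mul v E = 0 \<and> mul v F = - u"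

text \<open>J_M is the direct sum of the 2-dimensional summands V_{2k} = span{u k, v k}, k \<in> I:
 the family (u k, v k)_{k\<in>I} is an (injectively indexed) basis of J_M.\<close>
definition J_decomposition :: "('f::field \<Rightarrow> 'm::ab_group_add \<Rightarrow> 'm) \<Rightarrow> ('m \<Rightarrow> 'm \<Rightarrow> 'm) \<Rightarrow> 'm \<Rightarrow> 'm \<Rightarrow> 'm
     \<Rightarrow> 'i set \<Rightarrow> ('i \<Rightarrow> 'm) \<Rightarrow> ('i \<Rightarrow> 'm) \<Rightarrow> bool" where
  "J_decomposition sc mul E H F I u v \<longleftrightarrow>
     (\<forall>k\<in>I. std_pair mul E H F (u k) (v k)) \<and>
     inj_on (\<lambda>p. if snd p then u (fst p) else v (fst p)) (I \<times> UNIV) \<and>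
     \<not> module.dependent sc (u ` I \<union> v ` I) \<and>
     module.span sc (u ` I \<union> v ` I) = JM sc mul E H F"

end

theory Submission
  imports Defs
begin

text \<open>Sagle's derivations \<open>D(a,b) = R\<^sub>a\<^sub>b + [R\<^sub>a, R\<^sub>b]\<close> with \<open>a, b \<in> L\<close> preserve \<open>N\<close> and \<open>J\<close>;
  they act on \<open>J\<close> as \<open>-R\<^sub>a\<^sub>b\<close> and on \<open>N\<close> as \<open>2 R\<^sub>a\<^sub>b\<close>. Since \<open>2 D(E,F) = -R\<^sub>H\<close> squares to the
  identity on \<open>J\<close>, its cube on a product of two elements of \<open>J\<close> is four times itself, which in
  characteristic \<open>\<noteq> 3\<close> kills the \<open>J\<close>-component of the product: \<open>J J \<subseteq> N\<close>. Comparing the two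
  ways of applying \<open>D(a,b)\<close> to \<open>xy\<close> then gives \<open>2 (xy)(ab) = -((x(ab))y + x(y(ab)))\<close> for
  \<open>x, y \<in> J\<close>; with \<open>ab = E, F, H/2\<close> and the relations of \<open>V\<^sub>2\<^sub>i\<close>, \<open>V\<^sub>2\<^sub>j\<close> this yields the action of \<open>L\<close>
  on \<open>V\<^sub>2\<^sub>i V\<^sub>2\<^sub>j\<close>, and shows that \<open>u\<^sub>i v\<^sub>j - v\<^sub>i u\<^sub>j\<close> is annihilated by \<open>L\<close>, hence zero.\<close>

lemma module_hom_span_into:
  assumes "module_hom s s f" "f ` B \<subseteq> module.span s C" "x \<in> module.span s B"
  shows "f x \<in> module.span s C"
proof -
  interpret module_hom s s f by (fact assms(1))
  have "f x \<in> module.span s (f ` B)"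
    using assms(3) by (simp add: span_image)
  then show ?thesis
    using assms(2) m1.span_mono m1.span_span by blast
qed

locale malcev = vector_space sc
  for sc :: "'f::field \<Rightarrow> 'm::ab_group_add \<Rightarrow> 'm" +
  fixes mul :: "'m \<Rightarrow> 'm \<Rightarrow> 'm"
  assumes mul_add_left: "mul (x + y) z = mul x z + mul y z"
    and mul_add_right: "mul x (y + z) = mul x y + mul x z"
    and mul_scale_left: "mul (sc c x) y = sc c (mul x y)"
    and mul_scale_right: "mul x (sc c y) = sc c (mul x y)"
    and mul_self: "mul x x = 0"
    and malcev_identity: "mul (mul x z) (mul y t) =
        mul (mul (mul x y) z) t + mul (mul (mul y z) t) x
      + mul (mul (mul z t) x) y + mul (mul (mul t x) y) z"
begin

lemma mul_zero_left [simp]: "mul 0 y = 0"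
  using mul_add_left[of 0 0 y] by simp

lemma mul_zero_right [simp]: "mul x 0 = 0"
  using mul_add_right[of x 0 0] by simp

lemma mul_minus_left [simp]: "mul (- x) y = - mul x y"
  using mul_add_left[of "- x" x y] by (simp add: eq_neg_iff_add_eq_0)

lemma mul_minus_right [simp]: "mul x (- y) = - mul x y"
  using mul_add_right[of x "- y" y] by (simp add: eq_neg_iff_add_eq_0)

lemma mul_diff_left: "mul (x - y) z = mul x z - mul y z"
  using mul_add_left[of x "- y" z] by simp

lemma mul_diff_right: "mul x (y - z) = mul x y - mul x z"
  using mul_add_right[of x y "- z"] by simp

lemma mul_anticommute: "mul x y = - mul y x"
proof -
  have "mul (x + y) (x + y) = mul x x + mul y x + (mul x y + mul y y)"
    by (simp only: mul_add_left mul_add_right)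
  then have "mul x y + mul y x = 0" by (simp add: mul_self add.commute)
  then show ?thesis by (simp add: eq_neg_iff_add_eq_0)
qed

definition sagle_der :: "'m \<Rightarrow> 'm \<Rightarrow> 'm \<Rightarrow> 'm" where
  "sagle_der a b w = mul w (mul a b) + mul (mul w a) b - mul (mul w b) a"

text \<open>Sagle's theorem: the defect of the derivation rule is the sum of three instances of the
  Malcev identity, once the anticommutativity instances \<open>flips\<close> have brought both sides to a
  common normal form.\<close>
lemma sagle_der_mul: "sagle_der a b (mul x y) = mul (sagle_der a b x) y + mul x (sagle_der a b y)"
proof -
  note flips = mul_anticommute[of b a] mul_anticommute[of "mul b x" "mul a y"]
    mul_anticommute[of "mul x y" "mul a b"] mul_anticommute[of x a] mul_anticommute[of x b]
    mul_anticommute[of x "mul a b"] mul_anticommute[of x "mul (mul a b) y"]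
    mul_anticommute[of x "mul (mul a y) b"] mul_anticommute[of x "mul (mul b y) a"]
    mul_anticommute[of y a] mul_anticommute[of y b] mul_anticommute[of y "mul a b"]
    mul_anticommute[of y x]
  have "mul (mul x b) (mul y a) + mul (mul x y) (mul a b) + mul (mul x b) (mul a y) =
      (mul (mul (mul x y) b) a + mul (mul (mul y b) a) x + mul (mul (mul b a) x) y + mul (mul (mul a x) y) b)
    + (mul (mul (mul x a) y) b + mul (mul (mul a y) b) x + mul (mul (mul y b) x) a + mul (mul (mul b x) a) y)
    + (mul (mul (mul x a) b) y + mul (mul (mul a b) y) x + mul (mul (mul b y) x) a + mul (mul (mul y x) a) b)"
    by (simp only: malcev_identity)
  then show ?thesis
    unfolding sagle_der_def
    by (simp add: flips mul_add_left mul_add_right mul_diff_left mul_diff_right algebra_simps)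
qed

lemma module_hom_mul_left: "module_hom sc sc (\<lambda>x. mul x a)"
  by (simp add: module_hom_iff module_axioms mul_add_left mul_scale_left)

lemma module_hom_mul_right: "module_hom sc sc (mul a)"
  by (simp add: module_hom_iff module_axioms mul_add_right mul_scale_right)

lemma module_hom_sagle_der: "module_hom sc sc (sagle_der a b)"
  by (simp add: module_hom_iff module_axioms sagle_der_def mul_add_left mul_scale_left
      scale_right_distrib scale_right_diff_distrib algebra_simps)

lemma sagle_der_add: "sagle_der a b (x + y) = sagle_der a b x + sagle_der a b y"
  by (rule module_hom.add[OF module_hom_sagle_der])

lemma sagle_der_diff: "sagle_der a b (x - y) = sagle_der a b x - sagle_der a b y"
  by (rule module_hom.diff[OF module_hom_sagle_der])

lemma sagle_der_jac:
  "sagle_der a b (jac mul x y z) =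
     jac mul (sagle_der a b x) y z + jac mul x (sagle_der a b y) z + jac mul x y (sagle_der a b z)"
  unfolding jac_def by (simp add: sagle_der_add sagle_der_mul mul_add_left mul_add_right algebra_simps)

lemma sagle_der_trip:
  "sagle_der a b (trip mul x y z) =
     trip mul (sagle_der a b x) y z + trip mul x (sagle_der a b y) z + trip mul x y (sagle_der a b z)"
  unfolding trip_def
  by (simp only: sagle_der_add sagle_der_diff sagle_der_mul mul_add_left mul_add_right
      mul_diff_left mul_diff_right) (simp add: algebra_simps)

lemma trip_eq_sagle_der: "trip mul m a b = sagle_der a b m + mul m (mul a b)"
  unfolding trip_def sagle_der_def by (simp add: algebra_simps)

lemma jac_eq_sagle_der: "jac mul n a b = sagle_der a b n - (mul n (mul a b) + mul n (mul a b))"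
  unfolding jac_def sagle_der_def
  using mul_anticommute[of "mul a b" n] mul_anticommute[of b n] by (simp add: algebra_simps)

lemma derivation_cube_of_involutions:
  assumes add: "\<And>x y. d (x + y) = d x + d y"
    and der: "\<And>x y. d (mul x y) = mul (d x) y + mul x (d y)"
    and x: "d (d x) = x" and y: "d (d y) = y"
  shows "d (d (d (mul x y))) = d (mul x y) + d (mul x y) + d (mul x y) + d (mul x y)"
proof -
  have "d (d (mul x y)) = mul x y + mul x y + (mul (d x) (d y) + mul (d x) (d y))"
    by (simp add: add der x y mul_add_left mul_add_right algebra_simps)
  then show ?thesis
    by (simp add: add der x y mul_add_left mul_add_right algebra_simps)
qed

end

locale malcev_sl2 = malcev sc mul
  for sc :: "'f::field \<Rightarrow> 'm::ab_group_add \<Rightarrow> 'm" and mul +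
  fixes E H F :: 'm
  assumes mul_E_H: "mul E H = E" and mul_F_H: "mul F H = - F" and mul_E_F: "mul E F = sc (1/2) H"
    and two_neq_zero: "(2::'f) \<noteq> 0"
begin

abbreviation "L \<equiv> Lsub sc E H F"
abbreviation "N \<equiv> NM sc mul E H F"
abbreviation "J \<equiv> JM sc mul E H F"

lemma Lsub_eq_span: "L = span {E, H, F}"
  by (simp add: Lsub_def)

lemma E_in_Lsub: "E \<in> L" and H_in_Lsub: "H \<in> L" and F_in_Lsub: "F \<in> L"
  by (simp_all add: Lsub_eq_span span_base)

lemma mul_H_F: "mul H F = F"
  using mul_anticommute[of H F] mul_F_H by simp

lemma mul_Lsub_closed:
  assumes a: "a \<in> L" and b: "b \<in> L"
  shows "mul a b \<in> L"
proof -
  have generators: "mul p q \<in> L" if "p \<in> {E, H, F}" "q \<in> {E, H, F}" for p q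
    using that E_in_Lsub H_in_Lsub F_in_Lsub mul_anticommute[of H E] mul_anticommute[of F E]
    by (auto simp: mul_self mul_E_H mul_F_H mul_E_F mul_H_F span_zero span_neg span_scale
        Lsub_eq_span)
  have "mul p b \<in> L" if "p \<in> {E, H, F}" for p
    using module_hom_span_into[OF module_hom_mul_right, of p "{E, H, F}" "{E, H, F}" b]
      generators[OF that] b by (auto simp: Lsub_eq_span)
  then show ?thesis
    using module_hom_span_into[OF module_hom_mul_left, of b "{E, H, F}" "{E, H, F}" a] a
    by (auto simp: Lsub_eq_span)
qed

lemma sagle_der_Lsub: "a \<in> L \<Longrightarrow> b \<in> L \<Longrightarrow> c \<in> L \<Longrightarrow> sagle_der a b c \<in> L"
  using mul_Lsub_closed unfolding sagle_der_def Lsub_eq_span by (simp add: span_add span_diff)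

lemma subspace_NM: "subspace N"
proof -
  have hom: "module_hom sc sc (\<lambda>m. jac mul m a b)" for a b
    by (simp add: module_hom_iff module_axioms jac_def mul_add_left mul_add_right
        mul_scale_left mul_scale_right scale_right_distrib algebra_simps)
  then show ?thesis
    unfolding subspace_def NM_def
    by (auto simp: module_hom.zero[OF hom] module_hom.add[OF hom] module_hom.scale[OF hom])
qed

lemma subspace_JM: "subspace J"
proof -
  have hom: "module_hom sc sc (\<lambda>m. trip mul m a b)" for a b
    by (simp add: module_hom_iff module_axioms trip_def mul_add_left mul_add_right mul_diff_left
        mul_scale_left mul_scale_right scale_right_distrib scale_right_diff_distrib algebra_simps)
  then show ?thesis
    unfolding subspace_def JM_def
    by (auto simp: module_hom.zero[OF hom] module_hom.add[OF hom] module_hom.scale[OF hom])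
qed

lemma sagle_der_NM: assumes n: "n \<in> N" and a: "a \<in> L" and b: "b \<in> L"
  shows "sagle_der a b n \<in> N"
  unfolding NM_def
proof (intro CollectI ballI)
  fix p q assume p: "p \<in> L" and q: "q \<in> L"
  have "sagle_der a b (jac mul n p q) = 0"
    using n p q module_hom.zero[OF module_hom_sagle_der] by (simp add: NM_def)
  moreover have "jac mul n (sagle_der a b p) q = 0" "jac mul n p (sagle_der a b q) = 0"
    using n p q a b sagle_der_Lsub by (auto simp: NM_def)
  ultimately show "jac mul (sagle_der a b n) p q = 0"
    using sagle_der_jac[of a b n p q] by simp
qed

lemma sagle_der_JM: assumes m: "m \<in> J" and a: "a \<in> L" and b: "b \<in> L"
  shows "sagle_der a b m \<in> J"
  unfolding JM_def
proof (intro CollectI ballI)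
  fix p q assume p: "p \<in> L" and q: "q \<in> L"
  have "sagle_der a b (trip mul m p q) = 0"
    using m p q module_hom.zero[OF module_hom_sagle_der] by (simp add: JM_def)
  moreover have "trip mul m (sagle_der a b p) q = 0" "trip mul m p (sagle_der a b q) = 0"
    using m p q a b sagle_der_Lsub by (auto simp: JM_def)
  ultimately show "trip mul (sagle_der a b m) p q = 0"
    using sagle_der_trip[of a b m p q] by simp
qed

lemma sagle_der_JM_eq: "m \<in> J \<Longrightarrow> a \<in> L \<Longrightarrow> b \<in> L \<Longrightarrow> sagle_der a b m = - mul m (mul a b)"
  using trip_eq_sagle_der[of m a b] by (auto simp: JM_def eq_neg_iff_add_eq_0)

lemma sagle_der_NM_eq:
  "n \<in> N \<Longrightarrow> a \<in> L \<Longrightarrow> b \<in> L \<Longrightarrow> sagle_der a b n = mul n (mul a b) + mul n (mul a b)"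
  using jac_eq_sagle_der[of n a b] by (auto simp: NM_def)

lemma double_cancel: "p + p = q + q \<Longrightarrow> p = (q::'m)"
proof -
  assume "p + p = q + q"
  then have "sc 2 (p - q) = 0"
    by (simp add: scale_right_diff_distrib scale_left_distrib[of 1 1, simplified] algebra_simps)
  then show ?thesis using two_neq_zero by simp
qed

lemma half_add_half: "sc (1/2) p + sc (1/2) p = p"
proof -
  have "sc (1/2) p + sc (1/2) p = sc (1/2 + 1/2) p" by (simp only: scale_left_distrib)
  also have "(1/2 + 1/2 :: 'f) = 1" using two_neq_zero by (simp add: field_simps)
  finally show ?thesis by simp
qed

lemma double_eq_imp_half: "p + p = q \<Longrightarrow> p = sc (1/2) q"
  using double_cancel[of p "sc (1/2) q"] half_add_half[of q] by simp

text \<open>\<open>2 D(E,F)\<close>, doubled to absorb the factor \<open>1/2\<close> in \<open>EF = H/2\<close>.\<close>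
definition Hder :: "'m \<Rightarrow> 'm" where
  "Hder w = sagle_der E F w + sagle_der E F w"

lemma Hder_add: "Hder (x + y) = Hder x + Hder y"
  unfolding Hder_def by (simp add: sagle_der_add algebra_simps)

lemma Hder_mul: "Hder (mul x y) = mul (Hder x) y + mul x (Hder y)"
  unfolding Hder_def by (simp add: sagle_der_mul mul_add_left mul_add_right algebra_simps)

lemma Hder_NM: "n \<in> N \<Longrightarrow> Hder n \<in> N"
  unfolding Hder_def using sagle_der_NM[OF _ E_in_Lsub F_in_Lsub] subspace_NM
  by (simp add: subspace_add)

lemma Hder_JM: "m \<in> J \<Longrightarrow> Hder m \<in> J"
  unfolding Hder_def using sagle_der_JM[OF _ E_in_Lsub F_in_Lsub] subspace_JM
  by (simp add: subspace_add)

lemma Hder_JM_eq: assumes m: "m \<in> J" shows "Hder m = - mul m H"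
proof -
  have "sagle_der E F m = - sc (1/2) (mul m H)"
    using sagle_der_JM_eq[OF m E_in_Lsub F_in_Lsub] by (simp add: mul_E_F mul_scale_right)
  then show ?thesis
    unfolding Hder_def using half_add_half[of "mul m H"] by (metis minus_add_distrib)
qed

lemma eq_0_if_annihilated_by_sl2:
  assumes nondeg: "\<And>m. m \<noteq> 0 \<Longrightarrow> \<exists>a\<in>L. mul m a \<noteq> 0"
    and "mul w E = 0" "mul w H = 0" "mul w F = 0"
  shows "w = 0"
proof -
  have "mul w a = 0" if "a \<in> L" for a
    using module_hom.eq_0_on_span[OF module_hom_mul_right, of "{E, H, F}" w a] assms that
    by (auto simp: Lsub_eq_span)
  then show ?thesis using nondeg by blast
qed

lemma J_decomposition_mul_H_H:
  assumes dec: "J_decomposition sc mul E H F I u v" and x: "x \<in> J"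
  shows "mul (mul x H) H = x"
proof -
  have hom: "module_hom sc sc (\<lambda>x. mul (mul x H) H - x)"
    by (simp add: module_hom_iff module_axioms mul_add_left mul_scale_left
        scale_right_diff_distrib algebra_simps)
  have "mul (mul b H) H - b = 0" if "b \<in> u ` I \<union> v ` I" for b
    using dec that by (auto simp: J_decomposition_def std_pair_def)
  moreover have "x \<in> span (u ` I \<union> v ` I)"
    using dec x by (simp add: J_decomposition_def)
  ultimately show ?thesis
    using module_hom.eq_0_on_span[OF hom, of "u ` I \<union> v ` I" x] by simp
qed

end

locale malcev_sl2_split = malcev_sl2 sc mul E H F
  for sc :: "'f::field \<Rightarrow> 'm::ab_group_add \<Rightarrow> 'm" and mul E H F +
  assumes three_neq_zero: "(3::'f) \<noteq> 0"
    and NM_JM_sum: "\<exists>n\<in>N. \<exists>x\<in>J. m = n + x"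
    and NM_JM_inter: "N \<inter> J = {0}"
    and mul_H_H_JM: "x \<in> J \<Longrightarrow> mul (mul x H) H = x"
begin

lemma Hder_Hder_JM: "m \<in> J \<Longrightarrow> Hder (Hder m) = m"
  using Hder_JM_eq Hder_JM mul_H_H_JM by simp

lemma triple_eq_zero: "p + p + p = 0 \<Longrightarrow> p = (0::'m)"
proof -
  assume "p + p + p = 0"
  moreover have "sc (1 + 1 + 1) p = p + p + p" by (simp only: scale_left_distrib scale_one)
  ultimately have "sc 3 p = 0" by simp
  then show ?thesis using three_neq_zero by simp
qed

lemma JM_mul_JM_in_NM:
  assumes x: "x \<in> J" and y: "y \<in> J"
  shows "mul x y \<in> N"
proof -
  obtain n m where n: "n \<in> N" and m: "m \<in> J" and xy: "mul x y = n + m"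
    using NM_JM_sum by blast
  have "Hder (Hder (Hder (mul x y))) = Hder (mul x y) + Hder (mul x y) + Hder (mul x y) + Hder (mul x y)"
    by (rule derivation_cube_of_involutions[OF Hder_add Hder_mul Hder_Hder_JM[OF x] Hder_Hder_JM[OF y]])
  then have "(Hder (Hder (Hder n)) - (Hder n + Hder n + Hder n + Hder n))
      + (Hder (Hder (Hder m)) - (Hder m + Hder m + Hder m + Hder m)) = 0"
    unfolding xy by (simp add: Hder_add algebra_simps)
  moreover have "Hder (Hder (Hder n)) - (Hder n + Hder n + Hder n + Hder n) \<in> N"
    using n Hder_NM subspace_NM by (simp add: subspace_add subspace_diff)
  moreover have "Hder (Hder (Hder m)) - (Hder m + Hder m + Hder m + Hder m) \<in> J"
    using m Hder_JM subspace_JM by (simp add: subspace_add subspace_diff)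
  ultimately have "Hder (Hder (Hder m)) - (Hder m + Hder m + Hder m + Hder m) \<in> N \<inter> J"
    by (metis IntI add_eq_0_iff subspace_NM subspace_neg)
  then have "Hder m - (Hder m + Hder m + Hder m + Hder m) = 0"
    using NM_JM_inter Hder_Hder_JM[OF m] by auto
  moreover have "Hder m - (Hder m + Hder m + Hder m + Hder m) = - (Hder m + Hder m + Hder m)"
    by (simp add: algebra_simps)
  ultimately have "Hder m = 0"
    using triple_eq_zero by (metis neg_equal_0_iff_equal)
  then have "m = 0"
    using Hder_Hder_JM[OF m] Hder_add[of 0 0] by simp
  then show ?thesis using n xy by simp
qed

lemma mul_JM_JM_mul_Lsub:
  assumes x: "x \<in> J" and y: "y \<in> J" and a: "a \<in> L" and b: "b \<in> L"
  shows "mul (mul x y) (mul a b) + mul (mul x y) (mul a b)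
    = - (mul (mul x (mul a b)) y + mul x (mul y (mul a b)))"
  using sagle_der_NM_eq[OF JM_mul_JM_in_NM[OF x y] a b] sagle_der_mul[of a b x y]
    sagle_der_JM_eq[OF x a b] sagle_der_JM_eq[OF y a b] by simp

lemma mul_JM_JM_E:
  "x \<in> J \<Longrightarrow> y \<in> J \<Longrightarrow> mul (mul x y) E + mul (mul x y) E = - (mul (mul x E) y + mul x (mul y E))"
  using mul_JM_JM_mul_Lsub[OF _ _ E_in_Lsub H_in_Lsub] by (simp add: mul_E_H)

lemma mul_JM_JM_F:
  "x \<in> J \<Longrightarrow> y \<in> J \<Longrightarrow> mul (mul x y) F + mul (mul x y) F = - (mul (mul x F) y + mul x (mul y F))"
  using mul_JM_JM_mul_Lsub[OF _ _ H_in_Lsub F_in_Lsub] by (simp add: mul_H_F)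

lemma mul_JM_JM_H:
  assumes "x \<in> J" "y \<in> J"
  shows "mul (mul x y) H + mul (mul x y) H = - (mul (mul x H) y + mul x (mul y H))"
proof -
  have "sc (1/2) (mul (mul x y) H + mul (mul x y) H) = sc (1/2) (- (mul (mul x H) y + mul x (mul y H)))"
    using mul_JM_JM_mul_Lsub[OF assms E_in_Lsub F_in_Lsub]
    by (simp add: mul_E_F mul_scale_left mul_scale_right scale_right_distrib
        scale_right_diff_distrib)
  then show ?thesis using two_neq_zero by simp
qed

lemma std_pair_mul_comm:
  assumes nondeg: "\<And>m. m \<noteq> 0 \<Longrightarrow> \<exists>a\<in>L. mul m a \<noteq> 0"
    and i: "std_pair mul E H F ui vi" and j: "std_pair mul E H F uj vj"
    and J: "ui \<in> J" "vi \<in> J" "uj \<in> J" "vj \<in> J"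
  shows "mul ui vj = mul vi uj"
proof -
  note rel = i[unfolded std_pair_def] j[unfolded std_pair_def]
  have "mul (mul ui vj - mul vi uj) E = 0"
    using double_cancel[of "mul (mul ui vj) E" "mul (mul vi uj) E"]
      mul_JM_JM_E[of ui vj] mul_JM_JM_E[of vi uj] rel J by (simp add: mul_diff_left)
  moreover have "mul (mul ui vj - mul vi uj) H = 0"
    using double_cancel[of "mul (mul ui vj) H" "mul (mul vi uj) H"]
      mul_JM_JM_H[of ui vj] mul_JM_JM_H[of vi uj] rel J by (simp add: mul_diff_left)
  moreover have "mul (mul ui vj - mul vi uj) F = 0"
    using double_cancel[of "mul (mul ui vj) F" "mul (mul vi uj) F"]
      mul_JM_JM_F[of ui vj] mul_JM_JM_F[of vi uj] rel J by (simp add: mul_diff_left)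
  ultimately have "mul ui vj - mul vi uj = 0"
    using eq_0_if_annihilated_by_sl2[OF nondeg] by blast
  then show ?thesis by simp
qed

lemma std_pair_mul_action:
  assumes i: "std_pair mul E H F ui vi" and j: "std_pair mul E H F uj vj"
    and J: "ui \<in> J" "vi \<in> J" "uj \<in> J" "vj \<in> J"
    and comm: "mul ui vj = mul vi uj"
  shows "mul (mul ui uj) E = - mul ui vj
       \<and> mul (mul ui vj) E = - sc (1/2) (mul vi vj)
       \<and> mul (mul vi vj) E = 0
       \<and> mul (mul ui uj) F = 0
       \<and> mul (mul ui vj) F = sc (1/2) (mul ui uj)
       \<and> mul (mul vi vj) F = mul ui vj
       \<and> mul (mul ui uj) H = - mul ui uj
       \<and> mul (mul ui vj) H = 0
       \<and> mul (mul vi vj) H = mul vi vj"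
proof -
  note rel = i[unfolded std_pair_def] j[unfolded std_pair_def]
  have E_uu: "mul (mul ui uj) E + mul (mul ui uj) E = - mul ui vj + - mul ui vj"
    using mul_JM_JM_E[of ui uj] rel J comm by simp
  have E_uv: "mul (mul ui vj) E + mul (mul ui vj) E = - mul vi vj"
    using mul_JM_JM_E[of ui vj] rel J by simp
  have E_vv: "mul (mul vi vj) E + mul (mul vi vj) E = 0"
    using mul_JM_JM_E[of vi vj] rel J by simp
  have F_uu: "mul (mul ui uj) F + mul (mul ui uj) F = 0"
    using mul_JM_JM_F[of ui uj] rel J by simp
  have F_uv: "mul (mul ui vj) F + mul (mul ui vj) F = mul ui uj"
    using mul_JM_JM_F[of ui vj] rel J by simp
  have F_vv: "mul (mul vi vj) F + mul (mul vi vj) F = mul ui vj + mul ui vj"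
    using mul_JM_JM_F[of vi vj] rel J comm by (simp add: add.commute)
  have H_uu: "mul (mul ui uj) H + mul (mul ui uj) H = - mul ui uj + - mul ui uj"
    using mul_JM_JM_H[of ui uj] rel J by simp
  have H_uv: "mul (mul ui vj) H + mul (mul ui vj) H = 0"
    using mul_JM_JM_H[of ui vj] rel J by simp
  have H_vv: "mul (mul vi vj) H + mul (mul vi vj) H = mul vi vj + mul vi vj"
    using mul_JM_JM_H[of vi vj] rel J by simp
  show ?thesis
    using double_cancel[OF E_uu] double_eq_imp_half[OF E_uv]
      double_eq_imp_half[OF E_vv] double_eq_imp_half[OF F_uu] double_eq_imp_half[OF F_uv]
      double_cancel[OF F_vv] double_cancel[OF H_uu] double_eq_imp_half[OF H_uv] double_cancel[OF H_vv]
    by simp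
qed

lemma std_pair_square_zero:
  assumes nondeg: "\<And>m. m \<noteq> 0 \<Longrightarrow> \<exists>a\<in>L. mul m a \<noteq> 0"
    and std: "std_pair mul E H F ui vi" and J: "ui \<in> J" "vi \<in> J"
    and x: "x \<in> span {ui, vi}" and y: "y \<in> span {ui, vi}"
  shows "mul x y = 0"
proof -
  have "mul ui vi = mul vi ui"
    by (rule std_pair_mul_comm[OF nondeg std std J J])
  then have "mul ui vi + mul ui vi = 0 + 0"
    using mul_anticommute[of vi ui] by (simp add: eq_neg_iff_add_eq_0[symmetric])
  then have "mul ui vi = 0"
    by (rule double_cancel)
  then have uv: "mul ui vi = 0" "mul vi ui = 0"
    using mul_anticommute[of vi ui] by auto
  have "mul b c = 0" if "b \<in> {ui, vi}" "c \<in> {ui, vi}" for b c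
    using that uv mul_self by auto
  then have "mul x c = 0" if "c \<in> {ui, vi}" for c
    using module_hom.eq_0_on_span[OF module_hom_mul_left, of "{ui, vi}" c x] x that by blast
  then show ?thesis
    using module_hom.eq_0_on_span[OF module_hom_mul_right, of "{ui, vi}" x y] y by blast
qed

end

lemma malcev_algebra_iff_malcev: "malcev_algebra sc mul \<longleftrightarrow> malcev sc mul"
  unfolding malcev_algebra_def malcev_def malcev_axioms_def bilinear_prod_def by blast

theorem lemmal3:
  fixes sc :: "'f::field \<Rightarrow> 'm::ab_group_add \<Rightarrow> 'm"
    and mul :: "'m \<Rightarrow> 'm \<Rightarrow> 'm"
    and E H F :: 'm
    and I :: "'i set" and u v :: "'i \<Rightarrow> 'm"
    and i j :: 'i
  assumes char2: "(2::'f) \<noteq> 0" and char3: "(3::'f) \<noteq> 0"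
    and HM: "in_variety_H sc mul"
    and L: "sl2_triple sc mul E H F"
    and nondeg: "\<forall>m. m \<noteq> 0 \<longrightarrow> (\<exists>a\<in>Lsub sc E H F. mul m a \<noteq> 0)"
    and NJ_sum: "\<forall>m. \<exists>n\<in>NM sc mul E H F. \<exists>x\<in>JM sc mul E H F. m = n + x"
    and NJ_int: "NM sc mul E H F \<inter> JM sc mul E H F = {0}"
    and Jdec: "J_decomposition sc mul E H F I u v"
    and i: "i \<in> I" and j: "j \<in> I"
  shows "mul (mul (u i) (u j)) E = - mul (u i) (v j)
       \<and> mul (mul (u i) (v j)) E = - sc (1/2) (mul (v i) (v j))
       \<and> mul (mul (v i) (v j)) E = 0
       \<and> mul (mul (u i) (u j)) F = 0
       \<and> mul (mul (u i) (v j)) F = sc (1/2) (mul (u i) (u j))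
       \<and> mul (mul (v i) (v j)) F = mul (u i) (v j)
       \<and> mul (mul (u i) (u j)) H = - mul (u i) (u j)
       \<and> mul (mul (u i) (v j)) H = 0
       \<and> mul (mul (v i) (v j)) H = mul (v i) (v j)
       \<and> mul (u i) (v j) = mul (v i) (u j)
       \<and> (\<forall>x\<in>JM sc mul E H F. \<forall>y\<in>JM sc mul E H F.
            \<forall>a\<in>Lsub sc E H F. \<forall>b\<in>Lsub sc E H F. jac mul (mul x y) a b = 0)
       \<and> (i = j \<longrightarrow> (\<forall>x\<in>module.span sc {u i, v i}. \<forall>y\<in>module.span sc {u i, v i}. mul x y = 0))"
proof -
  have "malcev sc mul"
    using HM by (simp add: in_variety_H_def malcev_algebra_iff_malcev)
  then interpret malcev_sl2 sc mul E H F
    using L char2 by (simp add: malcev_sl2_def malcev_sl2_axioms_def sl2_triple_def)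
  interpret malcev_sl2_split sc mul E H F
    using char3 NJ_sum NJ_int J_decomposition_mul_H_H[OF Jdec]
    by unfold_locales auto
  have std: "std_pair mul E H F (u k) (v k)" if "k \<in> I" for k
    using Jdec that by (simp add: J_decomposition_def)
  have in_J: "u k \<in> J" "v k \<in> J" if "k \<in> I" for k
    using Jdec that span_base[of "u k" "u ` I \<union> v ` I"] span_base[of "v k" "u ` I \<union> v ` I"]
    by (auto simp: J_decomposition_def)
  have nondeg_L: "\<And>m. m \<noteq> 0 \<Longrightarrow> \<exists>a\<in>Lsub sc E H F. mul m a \<noteq> 0"
    using nondeg by blast
  have comm: "mul (u i) (v j) = mul (v i) (u j)"
    by (rule std_pair_mul_comm[OF nondeg_L std[OF i] std[OF j] in_J[OF i] in_J[OF j]])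
  show ?thesis
    using std_pair_mul_action[OF std[OF i] std[OF j] in_J[OF i] in_J[OF j] comm] comm
      JM_mul_JM_in_NM std_pair_square_zero[OF nondeg_L std[OF i] in_J[OF i]]
    by (auto simp: NM_def)
qed

end
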